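(* For an $L$-layer ADMM-CSNet at initialization (all weight entries i.i.d. $\mathcal N(0,1)$), for every $l\in[L]$ and $s\in[m]$, $\|\mathbf b^l_{s,0}\|_\infty=\tilde O(1/\sqrt m)$ with probability $1-me^{-c^l_{bs}\ln^2(m)}$ for some constant $c^l_{bs}>0$.
   Context: Fix $\lambda>0$ and $\sigma(x)=\log(1+e^{x-\lambda})-\log(1+e^{-x-\lambda})$ (componentwise), $L_\sigma$-Lipschitz and $\beta_\sigma$-smooth. ADMM-CSNet: input $\mathbf y\in\mathbb R^n$ with $|y_i|\le C_y$, initial $\mathbf z^0,\mathbf u^0\in\mathbb R^m$ with $|z^0_i|\le C_z$, $|u^0_i|\le C_u$; $\mathbf x^l=\frac1{\sqrt n}W_1^l\mathbf y+\frac1{\sqrt m}W_2^l(\mathbf z^{l-1}-\mathbf u^{l-1})$, $\mathbf z^l=\sigma(\mathbf x^l+\mathbf u^{l-1})$, $\mathbf u^l=\mathbf u^{l-1}+\mathbf x^l-\mathbf z^l$, $W_1^l\in\mathbb R^{m\times n}$, $W_2^l\in\mathbb R^{m\times m}$, output $\mathbf f=\frac1{\sqrt m}\mathbf z^L$, $f_s$ its $s$-th entry. $\mathbf b^l_{s,0}$ denotes $\partial f_s/\partial\mathbf z^l$ at the initial weights. $\tilde O$ is with respect to $m$, suppressing logarithmic factors. *)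

theory Defs
  imports "HOL-Probability.Probability"
begin

definition admm_sigma :: "real \<Rightarrow> real \<Rightarrow> real" where
  "admm_sigma lam x = ln (1 + exp (x - lam)) - ln (1 + exp (- x - lam))"

text \<open>Weights: W (l, 1, i, j) is entry (i,j) of W_1^l (i < m, j < n);
  W (l, 2, i, j) is entry (i,j) of W_2^l (i < m, j < m); layers l = 1..L.
  Vectors in R^m / R^n are functions nat => real, only indices < m (< n) matter.\<close>
type_synonym widx = "nat \<times> nat \<times> nat \<times> nat"

definition weight_idx :: "nat \<Rightarrow> nat \<Rightarrow> nat \<Rightarrow> widx set" where
  "weight_idx L n m =
     {(l, k, i, j) | l k i j. 1 \<le> l \<and> l \<le> L \<and> i < m \<and>
        ((k = 1 \<and> j < n) \<or> (k = 2 \<and> j < m))}"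

definition init_measure :: "nat \<Rightarrow> nat \<Rightarrow> nat \<Rightarrow> (widx \<Rightarrow> real) measure" where
  "init_measure L n m = PiM (weight_idx L n m) (\<lambda>_. density lborel std_normal_density)"

definition admm_x :: "nat \<Rightarrow> nat \<Rightarrow> (widx \<Rightarrow> real) \<Rightarrow> (nat \<Rightarrow> real) \<Rightarrow> nat
    \<Rightarrow> (nat \<Rightarrow> real) \<Rightarrow> (nat \<Rightarrow> real) \<Rightarrow> (nat \<Rightarrow> real)" where
  "admm_x n m W y l z u = (\<lambda>i.
      (\<Sum>j<n. W (l, 1, i, j) * y j) / sqrt (real n)
    + (\<Sum>j<m. W (l, 2, i, j) * (z j - u j)) / sqrt (real m))"

definition admm_layer :: "real \<Rightarrow> nat \<Rightarrow> nat \<Rightarrow> (widx \<Rightarrow> real) \<Rightarrow> (nat \<Rightarrow> real) \<Rightarrow> nat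
    \<Rightarrow> (nat \<Rightarrow> real) \<times> (nat \<Rightarrow> real) \<Rightarrow> (nat \<Rightarrow> real) \<times> (nat \<Rightarrow> real)" where
  "admm_layer lam n m W y l zu =
     (let z = fst zu; u = snd zu; x = admm_x n m W y l z u;
          z' = (\<lambda>i. admm_sigma lam (x i + u i)) in
      (z', (\<lambda>i. u i + x i - z' i)))"

text \<open>Apply k layers, starting after layer l (i.e. layers l+1, ..., l+k).\<close>
fun admm_steps :: "real \<Rightarrow> nat \<Rightarrow> nat \<Rightarrow> (widx \<Rightarrow> real) \<Rightarrow> (nat \<Rightarrow> real) \<Rightarrow> nat \<Rightarrow> nat
    \<Rightarrow> (nat \<Rightarrow> real) \<times> (nat \<Rightarrow> real) \<Rightarrow> (nat \<Rightarrow> real) \<times> (nat \<Rightarrow> real)" where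
  "admm_steps lam n m W y l 0 zu = zu"
| "admm_steps lam n m W y l (Suc k) zu =
     admm_steps lam n m W y (Suc l) k (admm_layer lam n m W y (Suc l) zu)"

definition admm_state where
  "admm_state lam n m W y z0 u0 l = admm_steps lam n m W y 0 l (z0, u0)"

text \<open>f_s as a function of z^l (all other quantities given by the forward recursion; in
  particular u^l = u^{l-1} + x^l - z^l, and layers l+1..L are applied).\<close>
definition admm_out_from :: "real \<Rightarrow> nat \<Rightarrow> nat \<Rightarrow> nat \<Rightarrow> (widx \<Rightarrow> real) \<Rightarrow> (nat \<Rightarrow> real)
    \<Rightarrow> (nat \<Rightarrow> real) \<Rightarrow> (nat \<Rightarrow> real) \<Rightarrow> nat \<Rightarrow> nat \<Rightarrow> (nat \<Rightarrow> real) \<Rightarrow> real" where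
  "admm_out_from lam L n m W y z0 u0 l s z =
     (let prev = admm_state lam n m W y z0 u0 (l - 1);
          x = admm_x n m W y l (fst prev) (snd prev);
          u = (\<lambda>i. snd prev i + x i - z i) in
      fst (admm_steps lam n m W y l (L - l) (z, u)) s / sqrt (real m))"

definition admm_b :: "real \<Rightarrow> nat \<Rightarrow> nat \<Rightarrow> nat \<Rightarrow> (widx \<Rightarrow> real) \<Rightarrow> (nat \<Rightarrow> real)
    \<Rightarrow> (nat \<Rightarrow> real) \<Rightarrow> (nat \<Rightarrow> real) \<Rightarrow> nat \<Rightarrow> nat \<Rightarrow> nat \<Rightarrow> real" where
  "admm_b lam L n m W y z0 u0 l s j =
     (let zl = fst (admm_state lam n m W y z0 u0 l) in
      deriv (\<lambda>t. admm_out_from lam L n m W y z0 u0 l s (zl(j := t))) (zl j))"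

definition admm_b_supnorm where
  "admm_b_supnorm lam L n m W y z0 u0 l s =
     Max ((\<lambda>j. \<bar>admm_b lam L n m W y z0 u0 l s j\<bar>) ` {..<m})"

end

theory Submission
  imports Defs
begin

text \<open>
  The vector b^l_s is computed by forward-mode differentiation: moving z^l along e_j moves
  (z^l, u^l) along (e_j, -e_j), and this tangent is pushed through the layers l+1, ..., L.
  Since |sigma'| <= 2, each layer multiplies the norm of the tangent by at most
  5 (beta / sqrt m + 1), where beta bounds the operator norm of W_2^q, and the output scaling
  contributes 1 / sqrt m.

  For a fixed unit vector c the entries of W_2 c are independent standard normals, so a
  Chernoff bound with E exp(X^2 / 4) = sqrt 2 gives P(|W_2 c|^2 >= T) <= exp(-T/4) sqrt 2 ^ m.
  A union bound over the (2m+1)^m points of a 1/m-grid on [-1,1]^m controls W_2 on the grid;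
  the grid also contains the unit vectors, which bounds the Frobenius norm and hence the
  rounding error, so that |W_2| <= 2 sqrt T. With T = 16 m ln m a layer fails with probability
  at most m^-m, and beta / sqrt m = 8 sqrt (ln m) yields |b^l_s|_inf <= 2 45^L (ln m)^L / sqrt m
  outside an event of probability at most m exp (-(ln m)^2).
\<close>

definition admm_sigma_deriv :: "real \<Rightarrow> real \<Rightarrow> real" where
  "admm_sigma_deriv lam x =
     exp (x - lam) / (1 + exp (x - lam)) + exp (- x - lam) / (1 + exp (- x - lam))"

lemma admm_sigma_has_real_derivative:
  "(admm_sigma lam has_real_derivative admm_sigma_deriv lam x) (at x)"
  unfolding admm_sigma_def admm_sigma_deriv_def
  by (rule derivative_eq_intros refl | simp add: add_pos_pos)+

lemma abs_admm_sigma_deriv_le: "\<bar>admm_sigma_deriv lam x\<bar> \<le> 2"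
proof -
  have logistic: "0 \<le> exp t / (1 + exp t) \<and> exp t / (1 + exp t) \<le> 1" for t :: real
    by (auto simp: divide_simps add_pos_pos)
  show ?thesis
    using logistic[of "x - lam"] logistic[of "- x - lam"]
    unfolding admm_sigma_deriv_def by linarith
qed

definition mat_vec :: "nat \<Rightarrow> (nat \<Rightarrow> nat \<Rightarrow> real) \<Rightarrow> (nat \<Rightarrow> real) \<Rightarrow> nat \<Rightarrow> real" where
  "mat_vec m A v = (\<lambda>i. \<Sum>j<m. A i j * v j)"

definition op_norm_le :: "nat \<Rightarrow> (nat \<Rightarrow> nat \<Rightarrow> real) \<Rightarrow> real \<Rightarrow> bool" where
  "op_norm_le m A \<beta> \<longleftrightarrow> (\<forall>v. L2_set (mat_vec m A v) {..<m} \<le> \<beta> * L2_set v {..<m})"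

definition unit_vec :: "nat \<Rightarrow> nat \<Rightarrow> nat \<Rightarrow> real" where
  "unit_vec m j = (\<lambda>i\<in>{..<m}. if i = j then 1 else 0)"

lemma L2_set_abs [simp]: "L2_set (\<lambda>i. \<bar>f i\<bar>) A = L2_set f A"
  unfolding L2_set_def by simp

lemma power2_L2_set: "(L2_set f A)\<^sup>2 = (\<Sum>i\<in>A. (f i)\<^sup>2)"
  unfolding L2_set_def by (simp add: sum_nonneg)

lemma L2_set_le_linear_combination:
  assumes "\<And>i. i \<in> A \<Longrightarrow> \<bar>f i\<bar> \<le> a * \<bar>g i\<bar> + b * \<bar>h i\<bar>" "a \<ge> 0" "b \<ge> 0"
  shows "L2_set f A \<le> a * L2_set g A + b * L2_set h A"
proof -
  have "L2_set f A \<le> L2_set (\<lambda>i. a * \<bar>g i\<bar> + b * \<bar>h i\<bar>) A"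
    unfolding L2_set_abs[of f, symmetric] by (rule L2_set_mono) (use assms in auto)
  also have "\<dots> \<le> L2_set (\<lambda>i. a * \<bar>g i\<bar>) A + L2_set (\<lambda>i. b * \<bar>h i\<bar>) A"
    by (rule L2_set_triangle_ineq)
  also have "\<dots> = a * L2_set g A + b * L2_set h A"
    using assms by (simp add: L2_set_right_distrib[symmetric])
  finally show ?thesis .
qed

lemma L2_set_unit_vec: "j < m \<Longrightarrow> L2_set (unit_vec m j) {..<m} = 1"
proof -
  assume "j < m"
  have "(\<Sum>i<m. (unit_vec m j i)\<^sup>2) = (\<Sum>i<m. if i = j then 1 else 0)"
    by (intro sum.cong) (auto simp: unit_vec_def)
  also have "\<dots> = 1"
    using \<open>j < m\<close> by simp
  finally show ?thesis
    by (simp add: L2_set_def)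
qed

lemma mat_vec_unit_vec: "j < m \<Longrightarrow> mat_vec m A (unit_vec m j) i = A i j"
proof -
  assume "j < m"
  have "mat_vec m A (unit_vec m j) i = (\<Sum>k<m. if k = j then A i k else 0)"
    unfolding mat_vec_def unit_vec_def by (intro sum.cong) auto
  also have "\<dots> = A i j"
    using \<open>j < m\<close> by simp
  finally show ?thesis .
qed

lemma L2_set_mat_vec_le_frobenius:
  "L2_set (mat_vec m A v) {..<m} \<le> sqrt (\<Sum>i<m. \<Sum>j<m. (A i j)\<^sup>2) * L2_set v {..<m}"
proof -
  have row: "\<bar>mat_vec m A v i\<bar> \<le> L2_set v {..<m} * \<bar>L2_set (A i) {..<m}\<bar>" for i
  proof -
    have "\<bar>mat_vec m A v i\<bar> \<le> (\<Sum>j<m. \<bar>A i j\<bar> * \<bar>v j\<bar>)"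
      unfolding mat_vec_def by (rule order.trans[OF sum_abs]) (simp add: abs_mult)
    also have "\<dots> \<le> L2_set (A i) {..<m} * L2_set v {..<m}"
      by (rule L2_set_mult_ineq)
    finally show ?thesis
      by (simp add: mult.commute)
  qed
  have "L2_set (mat_vec m A v) {..<m}
      \<le> L2_set v {..<m} * L2_set (\<lambda>i. L2_set (A i) {..<m}) {..<m} + 0 * L2_set (\<lambda>_. 0) {..<m}"
    by (rule L2_set_le_linear_combination) (use row in auto)
  also have "L2_set (\<lambda>i. L2_set (A i) {..<m}) {..<m} = sqrt (\<Sum>i<m. \<Sum>j<m. (A i j)\<^sup>2)"
    unfolding L2_set_def[of "\<lambda>i. L2_set (A i) {..<m}"] by (simp add: power2_L2_set)
  finally show ?thesis
    by (simp add: mult.commute)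
qed

lemma L2_set_mat_vec_diff_le:
  assumes "op_norm_le m A \<beta>" "\<beta> \<ge> 0"
  shows "L2_set (mat_vec m A (\<lambda>j. a j - b j)) {..<m} \<le> \<beta> * (L2_set a {..<m} + L2_set b {..<m})"
proof -
  have "L2_set (mat_vec m A (\<lambda>j. a j - b j)) {..<m} \<le> \<beta> * L2_set (\<lambda>j. a j - b j) {..<m}"
    using assms(1) by (simp add: op_norm_le_def)
  also have "\<dots> \<le> \<beta> * (1 * L2_set a {..<m} + 1 * L2_set b {..<m})"
    by (intro mult_left_mono L2_set_le_linear_combination) (auto simp: assms(2))
  finally show ?thesis
    by simp
qed

lemma L2_set_le_of_abs_le:
  assumes "\<And>j. j < m \<Longrightarrow> \<bar>d j\<bar> \<le> r"
  shows "L2_set d {..<m} \<le> sqrt (real m) * r"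
proof -
  have "L2_set d {..<m} \<le> L2_set (\<lambda>_. r) {..<m}"
    unfolding L2_set_abs[of d, symmetric] by (rule L2_set_mono) (use assms in auto)
  also have "\<dots> \<le> sqrt (real m) * r"
    using assms[of 0] by (cases "m = 0") (auto simp: L2_set_constant)
  finally show ?thesis .
qed

lemma op_norm_leI_unit:
  assumes "\<beta> \<ge> 0" and unit: "\<And>u. L2_set u {..<m} = 1 \<Longrightarrow> L2_set (mat_vec m A u) {..<m} \<le> \<beta>"
  shows "op_norm_le m A \<beta>"
  unfolding op_norm_le_def
proof
  fix v
  define r where "r = L2_set v {..<m}"
  show "L2_set (mat_vec m A v) {..<m} \<le> \<beta> * r"
  proof (cases "r = 0")
    case True
    then have "mat_vec m A v i = 0" for i
      by (simp add: r_def L2_set_eq_0_iff mat_vec_def)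
    then show ?thesis
      using True by (simp add: L2_set_def)
  next
    case False
    then have "r > 0"
      using L2_set_nonneg[of v "{..<m}"] unfolding r_def by linarith
    define u where "u = (\<lambda>j. v j / r)"
    have "L2_set u {..<m} = 1"
      using \<open>r > 0\<close> L2_set_left_distrib[of "1 / r" v "{..<m}"] by (simp add: u_def r_def)
    have "mat_vec m A v = (\<lambda>i. r * mat_vec m A u i)"
      using \<open>r > 0\<close> by (simp add: mat_vec_def u_def sum_distrib_left fun_eq_iff)
    then have "L2_set (mat_vec m A v) {..<m} = r * L2_set (mat_vec m A u) {..<m}"
      using \<open>r > 0\<close> by (simp add: L2_set_right_distrib)
    also have "\<dots> \<le> r * \<beta>"
      using unit[OF \<open>L2_set u {..<m} = 1\<close>] \<open>r > 0\<close> by simp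
    finally show ?thesis
      by (simp add: mult.commute)
  qed
qed

section \<open>Forward-mode derivative of the network\<close>

definition admm_W2 :: "(widx \<Rightarrow> real) \<Rightarrow> nat \<Rightarrow> nat \<Rightarrow> nat \<Rightarrow> real" where
  "admm_W2 W q = (\<lambda>i j. W (q, 2, i, j))"

definition has_tangent :: "nat \<Rightarrow> (real \<Rightarrow> (nat \<Rightarrow> real) \<times> (nat \<Rightarrow> real)) \<Rightarrow> real
    \<Rightarrow> (nat \<Rightarrow> real) \<times> (nat \<Rightarrow> real) \<Rightarrow> bool" where
  "has_tangent m zu t0 dzu \<longleftrightarrow>
     (\<forall>i<m. ((\<lambda>t. fst (zu t) i) has_real_derivative fst dzu i) (at t0) \<and>
            ((\<lambda>t. snd (zu t) i) has_real_derivative snd dzu i) (at t0))"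

definition state_norm :: "nat \<Rightarrow> (nat \<Rightarrow> real) \<times> (nat \<Rightarrow> real) \<Rightarrow> real" where
  "state_norm m zu = L2_set (fst zu) {..<m} + L2_set (snd zu) {..<m}"

definition layer_tangent :: "real \<Rightarrow> nat \<Rightarrow> nat \<Rightarrow> (widx \<Rightarrow> real) \<Rightarrow> (nat \<Rightarrow> real) \<Rightarrow> nat
    \<Rightarrow> (nat \<Rightarrow> real) \<times> (nat \<Rightarrow> real) \<Rightarrow> (nat \<Rightarrow> real) \<times> (nat \<Rightarrow> real)
    \<Rightarrow> (nat \<Rightarrow> real) \<times> (nat \<Rightarrow> real)" where
  "layer_tangent lam n m W y q zu dzu =
     (let x = admm_x n m W y q (fst zu) (snd zu);
          dx = (\<lambda>i. mat_vec m (admm_W2 W q) (\<lambda>j. fst dzu j - snd dzu j) i / sqrt (real m));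
          dz = (\<lambda>i. admm_sigma_deriv lam (x i + snd zu i) * (dx i + snd dzu i))
      in (dz, \<lambda>i. snd dzu i + dx i - dz i))"

fun steps_tangent :: "real \<Rightarrow> nat \<Rightarrow> nat \<Rightarrow> (widx \<Rightarrow> real) \<Rightarrow> (nat \<Rightarrow> real) \<Rightarrow> nat \<Rightarrow> nat
    \<Rightarrow> (nat \<Rightarrow> real) \<times> (nat \<Rightarrow> real) \<Rightarrow> (nat \<Rightarrow> real) \<times> (nat \<Rightarrow> real)
    \<Rightarrow> (nat \<Rightarrow> real) \<times> (nat \<Rightarrow> real)" where
  "steps_tangent lam n m W y l 0 zu dzu = dzu"
| "steps_tangent lam n m W y l (Suc k) zu dzu =
     steps_tangent lam n m W y (Suc l) k (admm_layer lam n m W y (Suc l) zu)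
       (layer_tangent lam n m W y (Suc l) zu dzu)"

lemma admm_x_has_real_derivative:
  assumes "has_tangent m zu t0 dzu" "i < m"
  shows "((\<lambda>t. admm_x n m W y q (fst (zu t)) (snd (zu t)) i) has_real_derivative
           mat_vec m (admm_W2 W q) (\<lambda>j. fst dzu j - snd dzu j) i / sqrt (real m)) (at t0)"
proof -
  have "((\<lambda>t. fst (zu t) j - snd (zu t) j) has_real_derivative fst dzu j - snd dzu j) (at t0)"
    if "j < m" for j
    using assms that unfolding has_tangent_def by (intro DERIV_diff) auto
  then have "((\<lambda>t. (\<Sum>j<n. W (q, 1, i, j) * y j) / sqrt (real n)
      + (\<Sum>j<m. W (q, 2, i, j) * (fst (zu t) j - snd (zu t) j)) / sqrt (real m)) has_real_derivative
      0 + (\<Sum>j<m. W (q, 2, i, j) * (fst dzu j - snd dzu j)) / sqrt (real m)) (at t0)"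
    by (intro DERIV_add DERIV_const DERIV_cdivide DERIV_sum DERIV_cmult) auto
  then show ?thesis
    by (simp add: admm_x_def mat_vec_def admm_W2_def)
qed

lemma has_tangent_admm_layer:
  assumes "has_tangent m zu t0 dzu"
  shows "has_tangent m (\<lambda>t. admm_layer lam n m W y q (zu t)) t0
           (layer_tangent lam n m W y q (zu t0) dzu)"
  unfolding has_tangent_def
proof (intro allI impI conjI)
  fix i assume "i < m"
  let ?x = "\<lambda>t. admm_x n m W y q (fst (zu t)) (snd (zu t)) i"
  let ?dx = "mat_vec m (admm_W2 W q) (\<lambda>j. fst dzu j - snd dzu j) i / sqrt (real m)"
  have x: "(?x has_real_derivative ?dx) (at t0)"
    by (rule admm_x_has_real_derivative[OF assms \<open>i < m\<close>])
  have u: "((\<lambda>t. snd (zu t) i) has_real_derivative snd dzu i) (at t0)"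
    using assms \<open>i < m\<close> unfolding has_tangent_def by blast
  have z: "((\<lambda>t. admm_sigma lam (?x t + snd (zu t) i)) has_real_derivative
      admm_sigma_deriv lam (?x t0 + snd (zu t0) i) * (?dx + snd dzu i)) (at t0)"
    by (rule DERIV_chain2[OF admm_sigma_has_real_derivative DERIV_add[OF x u]])
  then show "((\<lambda>t. fst (admm_layer lam n m W y q (zu t)) i) has_real_derivative
      fst (layer_tangent lam n m W y q (zu t0) dzu) i) (at t0)"
    by (simp add: admm_layer_def layer_tangent_def Let_def)
  have "((\<lambda>t. snd (zu t) i + ?x t - admm_sigma lam (?x t + snd (zu t) i)) has_real_derivative
      snd dzu i + ?dx - admm_sigma_deriv lam (?x t0 + snd (zu t0) i) * (?dx + snd dzu i)) (at t0)"
    by (intro DERIV_diff DERIV_add u x z)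
  then show "((\<lambda>t. snd (admm_layer lam n m W y q (zu t)) i) has_real_derivative
      snd (layer_tangent lam n m W y q (zu t0) dzu) i) (at t0)"
    by (simp add: admm_layer_def layer_tangent_def Let_def)
qed

lemma has_tangent_admm_steps:
  "has_tangent m zu t0 dzu \<Longrightarrow>
   has_tangent m (\<lambda>t. admm_steps lam n m W y l k (zu t)) t0
     (steps_tangent lam n m W y l k (zu t0) dzu)"
proof (induction k arbitrary: l zu dzu)
  case 0
  then show ?case by simp
next
  case (Suc k)
  show ?case
    using Suc.IH[OF has_tangent_admm_layer[OF Suc.prems]] by simp
qed

lemma state_norm_layer_tangent_le:
  assumes "op_norm_le m (admm_W2 W q) \<beta>" "\<beta> \<ge> 0"
  shows "state_norm m (layer_tangent lam n m W y q zu dzu)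
           \<le> 5 * (\<beta> / sqrt (real m) + 1) * state_norm m dzu"
proof -
  define dx where "dx = (\<lambda>i. mat_vec m (admm_W2 W q) (\<lambda>j. fst dzu j - snd dzu j) i / sqrt (real m))"
  define s where "s = (\<lambda>i. admm_sigma_deriv lam (admm_x n m W y q (fst zu) (snd zu) i + snd zu i))"
  define du where "du = snd dzu"
  have tangent: "layer_tangent lam n m W y q zu dzu
      = (\<lambda>i. s i * (dx i + du i), \<lambda>i. du i + dx i - s i * (dx i + du i))"
    by (simp add: layer_tangent_def Let_def dx_def s_def du_def)
  have dz': "\<bar>s i * (dx i + du i)\<bar> \<le> 2 * \<bar>dx i\<bar> + 2 * \<bar>du i\<bar>" for i
  proof -
    have "\<bar>s i * (dx i + du i)\<bar> = \<bar>s i\<bar> * \<bar>dx i + du i\<bar>"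
      by (simp add: abs_mult)
    also have "\<dots> \<le> 2 * (\<bar>dx i\<bar> + \<bar>du i\<bar>)"
      by (intro mult_mono abs_triangle_ineq) (auto simp: s_def abs_admm_sigma_deriv_le)
    finally show ?thesis
      by simp
  qed
  have du': "\<bar>du i + dx i - s i * (dx i + du i)\<bar> \<le> 3 * \<bar>dx i\<bar> + 3 * \<bar>du i\<bar>" for i
    using dz'[of i] by linarith
  have "L2_set dx {..<m}
      = L2_set (mat_vec m (admm_W2 W q) (\<lambda>j. fst dzu j - du j)) {..<m} * (1 / sqrt (real m))"
    by (subst L2_set_left_distrib) (auto simp: dx_def du_def)
  also have "\<dots> \<le> \<beta> * state_norm m dzu * (1 / sqrt (real m))"
    using L2_set_mat_vec_diff_le[OF assms] by (intro mult_right_mono) (auto simp: state_norm_def du_def)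
  finally have dx: "L2_set dx {..<m} \<le> \<beta> / sqrt (real m) * state_norm m dzu"
    by simp
  have "state_norm m (layer_tangent lam n m W y q zu dzu)
      \<le> (2 * L2_set dx {..<m} + 2 * L2_set du {..<m}) + (3 * L2_set dx {..<m} + 3 * L2_set du {..<m})"
    unfolding tangent state_norm_def fst_conv snd_conv
    by (intro add_mono L2_set_le_linear_combination dz' du') auto
  also have "\<dots> \<le> 5 * (\<beta> / sqrt (real m) * state_norm m dzu) + 5 * state_norm m dzu"
  proof -
    have "L2_set du {..<m} \<le> state_norm m dzu"
      by (simp add: state_norm_def du_def)
    then show ?thesis
      using dx by linarith
  qed
  also have "\<dots> = 5 * (\<beta> / sqrt (real m) + 1) * state_norm m dzu"
    by (simp add: algebra_simps)
  finally show ?thesis .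
qed

lemma state_norm_steps_tangent_le:
  assumes "\<beta> \<ge> 0" "\<And>q. l < q \<Longrightarrow> q \<le> l + k \<Longrightarrow> op_norm_le m (admm_W2 W q) \<beta>"
  shows "state_norm m (steps_tangent lam n m W y l k zu dzu)
           \<le> (5 * (\<beta> / sqrt (real m) + 1)) ^ k * state_norm m dzu"
  using assms(2)
proof (induction k arbitrary: l zu dzu)
  case 0
  then show ?case by simp
next
  case (Suc k)
  let ?K = "5 * (\<beta> / sqrt (real m) + 1)"
  have "state_norm m (steps_tangent lam n m W y l (Suc k) zu dzu)
      \<le> ?K ^ k * state_norm m (layer_tangent lam n m W y (Suc l) zu dzu)"
    using Suc.IH[of "Suc l"] Suc.prems by simp
  also have "\<dots> \<le> ?K ^ k * (?K * state_norm m dzu)"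
    using Suc.prems assms(1) by (intro mult_left_mono state_norm_layer_tangent_le) auto
  finally show ?case
    by (simp add: algebra_simps)
qed

lemma admm_b_eq_steps_tangent:
  fixes lam :: real and n l :: nat and W :: "widx \<Rightarrow> real" and y z0 u0 :: "nat \<Rightarrow> real"
  assumes "j < m" "s < m"
  defines "zl \<equiv> fst (admm_state lam n m W y z0 u0 l)"
  obtains zu0 where
    "((\<lambda>t. admm_out_from lam L n m W y z0 u0 l s (zl(j := t))) has_real_derivative
        admm_b lam L n m W y z0 u0 l s j) (at (zl j))"
    "admm_b lam L n m W y z0 u0 l s j
       = fst (steps_tangent lam n m W y l (L - l) zu0 (unit_vec m j, \<lambda>i. - unit_vec m j i)) s
           / sqrt (real m)"
proof -
  define prev where "prev = admm_state lam n m W y z0 u0 (l - 1)"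
  define x where "x = admm_x n m W y l (fst prev) (snd prev)"
  \<comment> \<open>Moving z^l_j leaves u^(l-1) and x^l fixed, so u^l = u^(l-1) + x^l - z^l moves oppositely.\<close>
  define zu where "zu = (\<lambda>t. (zl(j := t), \<lambda>i. snd prev i + x i - (zl(j := t)) i))"
  define dzu :: "(nat \<Rightarrow> real) \<times> (nat \<Rightarrow> real)" where "dzu = (unit_vec m j, \<lambda>i. - unit_vec m j i)"
  have out: "admm_out_from lam L n m W y z0 u0 l s (zl(j := t))
      = fst (admm_steps lam n m W y l (L - l) (zu t)) s / sqrt (real m)" for t
    unfolding admm_out_from_def zu_def prev_def x_def Let_def by simp
  have "has_tangent m zu (zl j) dzu"
    unfolding has_tangent_def
  proof (intro allI impI conjI)
    fix i assume "i < m"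
    show z: "((\<lambda>t. fst (zu t) i) has_real_derivative fst dzu i) (at (zl j))"
      using \<open>i < m\<close> by (cases "i = j") (auto simp: zu_def dzu_def unit_vec_def)
    have "((\<lambda>t. snd prev i + x i - fst (zu t) i) has_real_derivative 0 + 0 - fst dzu i) (at (zl j))"
      by (intro DERIV_diff DERIV_add DERIV_const z)
    then show "((\<lambda>t. snd (zu t) i) has_real_derivative snd dzu i) (at (zl j))"
      by (simp add: zu_def dzu_def)
  qed
  then have "has_tangent m (\<lambda>t. admm_steps lam n m W y l (L - l) (zu t)) (zl j)
      (steps_tangent lam n m W y l (L - l) (zu (zl j)) dzu)"
    by (rule has_tangent_admm_steps)
  then have deriv: "((\<lambda>t. admm_out_from lam L n m W y z0 u0 l s (zl(j := t))) has_real_derivative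
      fst (steps_tangent lam n m W y l (L - l) (zu (zl j)) dzu) s / sqrt (real m)) (at (zl j))"
    using \<open>s < m\<close> unfolding out has_tangent_def by (intro DERIV_cdivide) auto
  moreover have "admm_b lam L n m W y z0 u0 l s j
      = fst (steps_tangent lam n m W y l (L - l) (zu (zl j)) dzu) s / sqrt (real m)"
    using DERIV_imp_deriv[OF deriv] by (simp add: admm_b_def zl_def)
  ultimately show thesis
    using that[of "zu (zl j)"] by (simp add: dzu_def)
qed

lemma abs_admm_b_le:
  assumes "j < m" "s < m" "\<beta> \<ge> 0" "\<And>q. l < q \<Longrightarrow> q \<le> L \<Longrightarrow> op_norm_le m (admm_W2 W q) \<beta>"
  shows "\<bar>admm_b lam L n m W y z0 u0 l s j\<bar> \<le> 2 * (5 * (\<beta> / sqrt (real m) + 1)) ^ (L - l) / sqrt (real m)"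
proof -
  obtain zu0 where b: "admm_b lam L n m W y z0 u0 l s j
      = fst (steps_tangent lam n m W y l (L - l) zu0 (unit_vec m j, \<lambda>i. - unit_vec m j i)) s
          / sqrt (real m)"
    using admm_b_eq_steps_tangent[OF assms(1,2)] by blast
  let ?v = "steps_tangent lam n m W y l (L - l) zu0 (unit_vec m j, \<lambda>i. - unit_vec m j i)"
  have "\<bar>fst ?v s\<bar> \<le> L2_set (fst ?v) {..<m}"
    using member_le_L2_set[of "{..<m}" s "\<lambda>i. \<bar>fst ?v i\<bar>"] assms(2) by simp
  also have "\<dots> \<le> state_norm m ?v"
    by (simp add: state_norm_def)
  also have "\<dots> \<le> (5 * (\<beta> / sqrt (real m) + 1)) ^ (L - l) * state_norm m (unit_vec m j, \<lambda>i. - unit_vec m j i)"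
    using assms(3,4) by (intro state_norm_steps_tangent_le) auto
  also have "state_norm m (unit_vec m j, \<lambda>i. - unit_vec m j i) = 2"
    using L2_set_unit_vec[OF assms(1)] by (simp add: state_norm_def L2_set_def)
  finally show ?thesis
    unfolding b by (simp add: divide_right_mono mult.commute)
qed

lemma admm_sigma_borel_measurable [measurable]: "admm_sigma lam \<in> borel_measurable borel"
  unfolding admm_sigma_def by measurable

lemma DERIV_difference_quotient_LIMSEQ:
  assumes "(f has_real_derivative D) (at x)"
  shows "(\<lambda>k. (f (x + inverse (real (Suc k))) - f x) / inverse (real (Suc k))) \<longlonglongrightarrow> D"
proof -
  have "(\<lambda>h. (f (x + h) - f x) / h) \<midarrow>0\<rightarrow> D"
    using assms by (simp add: DERIV_def)
  moreover have "filterlim (\<lambda>k. inverse (real (Suc k))) (at 0) sequentially"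
    unfolding filterlim_at using LIMSEQ_inverse_real_of_nat by auto
  ultimately show ?thesis
    by (auto dest: filterlim_compose simp: o_def)
qed

context
  fixes M :: "(widx \<Rightarrow> real) measure"
  assumes coordinate_measurable [measurable]: "\<And>k. (\<lambda>W. W k) \<in> borel_measurable M"
begin

lemma borel_measurable_admm_x:
  assumes [measurable]: "\<And>i. (\<lambda>W. Z W i) \<in> borel_measurable M" "\<And>i. (\<lambda>W. U W i) \<in> borel_measurable M"
  shows "(\<lambda>W. admm_x n m W y q (Z W) (U W) i) \<in> borel_measurable M"
  unfolding admm_x_def by measurable

lemma borel_measurable_admm_layer:
  assumes [measurable]: "\<And>i. (\<lambda>W. fst (zu W) i) \<in> borel_measurable M"
    "\<And>i. (\<lambda>W. snd (zu W) i) \<in> borel_measurable M"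
  shows "(\<lambda>W. fst (admm_layer lam n m W y q (zu W)) i) \<in> borel_measurable M"
    "(\<lambda>W. snd (admm_layer lam n m W y q (zu W)) i) \<in> borel_measurable M"
proof -
  note [measurable] = borel_measurable_admm_x[of "\<lambda>W. fst (zu W)" "\<lambda>W. snd (zu W)"]
  show "(\<lambda>W. fst (admm_layer lam n m W y q (zu W)) i) \<in> borel_measurable M"
    "(\<lambda>W. snd (admm_layer lam n m W y q (zu W)) i) \<in> borel_measurable M"
    by (simp_all add: admm_layer_def Let_def)
qed

lemma borel_measurable_admm_steps:
  assumes "\<And>i. (\<lambda>W. fst (zu W) i) \<in> borel_measurable M" "\<And>i. (\<lambda>W. snd (zu W) i) \<in> borel_measurable M"
  shows "(\<lambda>W. fst (admm_steps lam n m W y l k (zu W)) i) \<in> borel_measurable M \<and>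
         (\<lambda>W. snd (admm_steps lam n m W y l k (zu W)) i) \<in> borel_measurable M"
  using assms
proof (induction k arbitrary: l zu i)
  case 0
  then show ?case by simp
next
  case (Suc k)
  show ?case
    using Suc.IH[OF borel_measurable_admm_layer[OF Suc.prems]] by simp
qed

lemma borel_measurable_admm_state [measurable]:
  "(\<lambda>W. fst (admm_state lam n m W y z0 u0 l) i) \<in> borel_measurable M"
  "(\<lambda>W. snd (admm_state lam n m W y z0 u0 l) i) \<in> borel_measurable M"
  unfolding admm_state_def using borel_measurable_admm_steps by auto

lemma borel_measurable_admm_out_from:
  assumes [measurable]: "\<And>i. (\<lambda>W. Z W i) \<in> borel_measurable M"
  shows "(\<lambda>W. admm_out_from lam L n m W y z0 u0 l s (Z W)) \<in> borel_measurable M"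
proof -
  let ?prev = "\<lambda>W. admm_state lam n m W y z0 u0 (l - 1)"
  let ?zu = "\<lambda>W. (Z W, \<lambda>i. snd (?prev W) i + admm_x n m W y l (fst (?prev W)) (snd (?prev W)) i - Z W i)"
  note [measurable] = borel_measurable_admm_x[of "\<lambda>W. fst (?prev W)" "\<lambda>W. snd (?prev W)"]
  have "(\<lambda>W. fst (admm_steps lam n m W y l (L - l) (?zu W)) s) \<in> borel_measurable M"
    by (intro borel_measurable_admm_steps[THEN conjunct1]) (unfold fst_conv snd_conv, measurable)+
  then show ?thesis
    unfolding admm_out_from_def Let_def by measurable
qed

lemma borel_measurable_admm_b:
  assumes "j < m" "s < m"
  shows "(\<lambda>W. admm_b lam L n m W y z0 u0 l s j) \<in> borel_measurable M"
proof (rule borel_measurable_LIMSEQ_real)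
  let ?zl = "\<lambda>W. fst (admm_state lam n m W y z0 u0 l)"
  let ?F = "\<lambda>W t. admm_out_from lam L n m W y z0 u0 l s ((?zl W)(j := t))"
  fix W
  have "(?F W has_real_derivative admm_b lam L n m W y z0 u0 l s j) (at (?zl W j))"
    using admm_b_eq_steps_tangent[OF assms] by blast
  then show "(\<lambda>k. (?F W (?zl W j + inverse (real (Suc k))) - ?F W (?zl W j)) / inverse (real (Suc k)))
      \<longlonglongrightarrow> admm_b lam L n m W y z0 u0 l s j"
    by (rule DERIV_difference_quotient_LIMSEQ)
next
  let ?zl = "\<lambda>W. fst (admm_state lam n m W y z0 u0 l)"
  let ?F = "\<lambda>W t. admm_out_from lam L n m W y z0 u0 l s ((?zl W)(j := t))"
  have shifted [measurable]: "(\<lambda>W. ?F W (?zl W j + c)) \<in> borel_measurable M" for c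
    by (rule borel_measurable_admm_out_from) (auto simp: fun_upd_def)
  have "(\<lambda>W. ?F W (?zl W j)) \<in> borel_measurable M"
    using shifted[of 0] by simp
  then show "(\<lambda>W. (?F W (?zl W j + inverse (real (Suc k))) - ?F W (?zl W j)) / inverse (real (Suc k)))
      \<in> borel_measurable M" for k
    by measurable
qed

lemma borel_measurable_admm_b_supnorm:
  "s < m \<Longrightarrow> (\<lambda>W. admm_b_supnorm lam L n m W y z0 u0 l s) \<in> borel_measurable M"
  unfolding admm_b_supnorm_def
  by (rule borel_measurable_Max) (auto intro!: borel_measurable_abs borel_measurable_admm_b)

end

section \<open>A finite net for the operator norm\<close>

definition grid_net :: "nat \<Rightarrow> (nat \<Rightarrow> real) set" where
  "grid_net m = PiE {..<m} (\<lambda>_. (\<lambda>k. real_of_int k / real m) ` {- int m..int m})"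

lemma finite_grid_net: "finite (grid_net m)"
  unfolding grid_net_def by (intro finite_PiE) auto

lemma card_grid_net_le: "card (grid_net m) \<le> (2 * m + 1) ^ m"
proof -
  have "card ((\<lambda>k. real_of_int k / real m) ` {- int m..int m}) \<le> card {- int m..int m}"
    by (rule card_image_le) simp
  then have "card ((\<lambda>k. real_of_int k / real m) ` {- int m..int m}) \<le> 2 * m + 1"
    by simp
  then show ?thesis
    unfolding grid_net_def by (simp add: card_PiE power_mono)
qed

lemma unit_vec_in_grid_net: "0 < m \<Longrightarrow> unit_vec m j \<in> grid_net m"
proof -
  assume "0 < m"
  then have "1 \<in> (\<lambda>k. real_of_int k / real m) ` {- int m..int m}"
    by (intro image_eqI[of _ _ "int m"]) auto
  moreover have "0 \<in> (\<lambda>k. real_of_int k / real m) ` {- int m..int m}"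
    by (intro image_eqI[of _ _ 0]) auto
  ultimately show ?thesis
    unfolding grid_net_def unit_vec_def by auto
qed

lemma frobenius_le_of_grid_net:
  assumes "\<forall>w\<in>grid_net m. (\<Sum>i<m. (mat_vec m A w i)\<^sup>2) \<le> T * (L2_set w {..<m})\<^sup>2" "0 < m"
  shows "(\<Sum>i<m. \<Sum>j<m. (A i j)\<^sup>2) \<le> real m * T"
proof -
  have "(\<Sum>i<m. (A i j)\<^sup>2) \<le> T" if "j < m" for j
  proof -
    have "(\<Sum>i<m. (mat_vec m A (unit_vec m j) i)\<^sup>2) \<le> T * (L2_set (unit_vec m j) {..<m})\<^sup>2"
      using assms(1) unit_vec_in_grid_net[OF assms(2)] by blast
    then show ?thesis
      using that by (simp add: L2_set_unit_vec mat_vec_unit_vec)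
  qed
  then have "(\<Sum>j<m. \<Sum>i<m. (A i j)\<^sup>2) \<le> (\<Sum>j<m. T)"
    by (intro sum_mono) auto
  then show ?thesis
    by (subst sum.swap) simp
qed

lemma grid_net_rounding:
  assumes "0 < m" "\<And>j. j < m \<Longrightarrow> \<bar>u j\<bar> \<le> 1"
  obtains w where "w \<in> grid_net m" "L2_set (\<lambda>j. u j - w j) {..<m} \<le> 1 / (2 * sqrt (real m))"
proof
  let ?k = "\<lambda>j. round (u j * real m)"
  let ?w = "\<lambda>j\<in>{..<m}. real_of_int (?k j) / real m"
  have "- int m \<le> ?k j \<and> ?k j \<le> int m" if "j < m" for j
  proof -
    have "\<bar>u j * real m\<bar> \<le> real m"
      using assms(2)[OF that] by (simp add: abs_mult mult_left_le_one_le)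
    then show ?thesis
      using of_int_round_le[of "u j * real m"] of_int_round_ge[of "u j * real m"] by linarith
  qed
  then show "?w \<in> grid_net m"
    unfolding grid_net_def by auto
  have "\<bar>u j - ?w j\<bar> \<le> 1 / (2 * real m)" if "j < m" for j
  proof -
    have "u j - real_of_int (?k j) / real m = (u j * real m - real_of_int (?k j)) / real m"
      using assms(1) by (simp add: field_simps)
    then have "\<bar>u j - real_of_int (?k j) / real m\<bar> = \<bar>u j * real m - real_of_int (?k j)\<bar> / real m"
      by (simp only: abs_divide)
    also have "\<dots> \<le> (1 / 2) / real m"
      using of_int_round_le[of "u j * real m"] of_int_round_ge[of "u j * real m"]
      by (intro divide_right_mono) linarith+
    finally show ?thesis
      using that by simp
  qed
  then have "L2_set (\<lambda>j. u j - ?w j) {..<m} \<le> sqrt (real m) * (1 / (2 * real m))"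
    by (rule L2_set_le_of_abs_le)
  also have "\<dots> = 1 / (2 * sqrt (real m))"
    using assms(1) by (simp add: field_simps flip: real_sqrt_mult)
  finally show "L2_set (\<lambda>j. u j - ?w j) {..<m} \<le> 1 / (2 * sqrt (real m))" .
qed

lemma L2_set_mat_vec_le_of_sum_squares_le:
  assumes "(\<Sum>i<m. (mat_vec m A w i)\<^sup>2) \<le> T * (L2_set w {..<m})\<^sup>2" "0 \<le> T"
  shows "L2_set (mat_vec m A w) {..<m} \<le> sqrt T * L2_set w {..<m}"
proof -
  have "L2_set (mat_vec m A w) {..<m} \<le> sqrt (T * (L2_set w {..<m})\<^sup>2)"
    using assms(1) by (simp add: L2_set_def)
  then show ?thesis
    by (simp add: real_sqrt_mult)
qed

lemma op_norm_le_of_grid_net: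
  assumes net: "\<forall>w\<in>grid_net m. (\<Sum>i<m. (mat_vec m A w i)\<^sup>2) \<le> T * (L2_set w {..<m})\<^sup>2"
    and "0 < m" "0 \<le> T"
  shows "op_norm_le m A (2 * sqrt T)"
proof (rule op_norm_leI_unit)
  fix u assume u: "L2_set u {..<m} = 1"
  have "\<bar>u j\<bar> \<le> 1" if "j < m" for j
    using member_le_L2_set[of "{..<m}" j "\<lambda>i. \<bar>u i\<bar>"] that u by simp
  then obtain w where w: "w \<in> grid_net m" and d: "L2_set (\<lambda>j. u j - w j) {..<m} \<le> 1 / (2 * sqrt (real m))"
    using grid_net_rounding[OF \<open>0 < m\<close>] by blast
  have "L2_set w {..<m} \<le> 1 * L2_set u {..<m} + 1 * L2_set (\<lambda>j. u j - w j) {..<m}"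
    by (rule L2_set_le_linear_combination) auto
  moreover have "1 / (2 * sqrt (real m)) \<le> 1 / 2"
    using \<open>0 < m\<close> by (simp add: divide_simps)
  ultimately have "L2_set w {..<m} \<le> 3 / 2"
    using d u by linarith
  have "L2_set (mat_vec m A w) {..<m} \<le> sqrt T * L2_set w {..<m}"
    using net w \<open>0 \<le> T\<close> by (intro L2_set_mat_vec_le_of_sum_squares_le) auto
  also have "\<dots> \<le> sqrt T * (3 / 2)"
    using \<open>L2_set w {..<m} \<le> 3 / 2\<close> \<open>0 \<le> T\<close> by (intro mult_left_mono) auto
  finally have Aw: "L2_set (mat_vec m A w) {..<m} \<le> sqrt T * (3 / 2)" .
  have "L2_set (mat_vec m A (\<lambda>j. u j - w j)) {..<m}
      \<le> sqrt (\<Sum>i<m. \<Sum>j<m. (A i j)\<^sup>2) * L2_set (\<lambda>j. u j - w j) {..<m}"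
    by (rule L2_set_mat_vec_le_frobenius)
  also have "\<dots> \<le> sqrt (real m * T) * (1 / (2 * sqrt (real m)))"
    using frobenius_le_of_grid_net[OF net \<open>0 < m\<close>] d \<open>0 \<le> T\<close> by (intro mult_mono) auto
  also have "\<dots> = sqrt T / 2"
    using \<open>0 < m\<close> by (simp add: real_sqrt_mult)
  finally have Ad: "L2_set (mat_vec m A (\<lambda>j. u j - w j)) {..<m} \<le> sqrt T / 2" .
  have "mat_vec m A u = (\<lambda>i. mat_vec m A w i + mat_vec m A (\<lambda>j. u j - w j) i)"
    by (simp add: mat_vec_def right_diff_distrib sum_subtractf fun_eq_iff)
  then have "L2_set (mat_vec m A u) {..<m}
      \<le> L2_set (mat_vec m A w) {..<m} + L2_set (mat_vec m A (\<lambda>j. u j - w j)) {..<m}"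
    by (simp add: L2_set_triangle_ineq)
  then show "L2_set (mat_vec m A u) {..<m} \<le> 2 * sqrt T"
    using Aw Ad by linarith
qed (use \<open>0 \<le> T\<close> in simp)
section \<open>Gaussian initialization\<close>

lemma (in product_prob_space) indep_vars_PiM_coordinates:
  assumes "I \<noteq> {}"
  shows "P.indep_vars M (\<lambda>i x. x i) I"
proof -
  have "distr (PiM I M) (PiM I M) (\<lambda>x. restrict x I) = distr (PiM I M) (PiM I M) (\<lambda>x. x)"
    by (rule distr_cong) (auto simp: space_PiM PiE_restrict)
  also have "\<dots> = PiM I (\<lambda>i. distr (PiM I M) (M i) (\<lambda>x. x i))"
    by (simp add: PiM_component cong: PiM_cong)
  finally show ?thesis
    by (subst P.indep_vars_iff_distr_eq_PiM'[OF assms]) auto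
qed

lemma (in prob_space) indep_vars_linear_combinations:
  fixes X :: "'i \<Rightarrow> 'a \<Rightarrow> real" and c :: "'i \<Rightarrow> real"
  assumes indep: "indep_vars (\<lambda>_. borel) X I"
    and "\<And>j. j \<in> J \<Longrightarrow> K j \<subseteq> I" "disjoint_family_on K J"
  shows "indep_vars (\<lambda>_. borel) (\<lambda>j \<omega>. \<Sum>k\<in>K j. c k * X k \<omega>) J"
proof -
  have "indep_vars (\<lambda>j. PiM (K j) (\<lambda>_. borel)) (\<lambda>j \<omega>. restrict (\<lambda>k. X k \<omega>) (K j)) J"
    by (rule indep_vars_restrict[OF indep assms(2,3)])
  then have "indep_vars (\<lambda>_. borel) (\<lambda>j \<omega>. \<Sum>k\<in>K j. c k * restrict (\<lambda>k. X k \<omega>) (K j) k) J"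
  proof (rule indep_vars_compose2)
    fix j
    show "(\<lambda>r. \<Sum>k\<in>K j. c k * r k) \<in> borel_measurable (PiM (K j) (\<lambda>_. borel))"
    proof (rule borel_measurable_sum)
      fix k assume "k \<in> K j"
      show "(\<lambda>r. c k * r k) \<in> borel_measurable (PiM (K j) (\<lambda>_. borel))"
        by (rule borel_measurable_times[OF borel_measurable_const
              measurable_component_singleton[OF \<open>k \<in> K j\<close>]])
    qed
  qed
  moreover have "(\<lambda>\<omega>. \<Sum>k\<in>K j. c k * restrict (\<lambda>k. X k \<omega>) (K j) k) = (\<lambda>\<omega>. \<Sum>k\<in>K j. c k * X k \<omega>)" for j
    by (auto intro!: sum.cong)
  ultimately show ?thesis
    by simp
qed

lemma (in prob_space) std_normal_unit_linear_combination:
  assumes indep: "indep_vars (\<lambda>_. borel) X I"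
    and normal: "\<And>i. i \<in> I \<Longrightarrow> distributed M lborel (X i) (\<lambda>x. ennreal (std_normal_density x))"
    and "finite K" "K \<subseteq> I" and unit: "(\<Sum>k\<in>K. (c k)\<^sup>2) = 1"
  shows "distributed M lborel (\<lambda>\<omega>. \<Sum>k\<in>K. c k * X k \<omega>) (\<lambda>x. ennreal (std_normal_density x))"
proof -
  define K' where "K' = {k \<in> K. c k \<noteq> 0}"
  have "finite K'"
    using \<open>finite K\<close> by (simp add: K'_def)
  have sum_K': "(\<Sum>k\<in>K. f k) = (\<Sum>k\<in>K'. f k)" if "\<And>k. c k = 0 \<Longrightarrow> f k = 0" for f :: "_ \<Rightarrow> real"
    using \<open>finite K\<close> that by (intro sum.mono_neutral_right) (auto simp: K'_def)
  have "K' \<noteq> {}"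
    using unit sum_K'[of "\<lambda>k. (c k)\<^sup>2"] by auto
  have "distributed M lborel (\<lambda>\<omega>. \<Sum>k\<in>K'. 0 + c k * X k \<omega>)
      (\<lambda>x. ennreal (normal_density (\<Sum>k\<in>K'. 0 + c k * 0) (sqrt (\<Sum>k\<in>K'. (\<bar>c k\<bar> * 1)\<^sup>2)) x))"
  proof (rule sum_indep_normal[OF \<open>finite K'\<close> \<open>K' \<noteq> {}\<close>])
    show "indep_vars (\<lambda>_. borel) (\<lambda>k \<omega>. 0 + c k * X k \<omega>) K'"
      using \<open>K \<subseteq> I\<close> by (intro indep_vars_compose2[OF indep_vars_subset[OF indep]]) (auto simp: K'_def)
    show "distributed M lborel (\<lambda>\<omega>. 0 + c k * X k \<omega>)
        (\<lambda>x. ennreal (normal_density (0 + c k * 0) (\<bar>c k\<bar> * 1) x))" if "k \<in> K'" for k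
      using that \<open>K \<subseteq> I\<close> by (intro normal_density_affine normal) (auto simp: K'_def)
  qed (auto simp: K'_def)
  moreover have "(\<Sum>k\<in>K'. (\<bar>c k\<bar> * 1)\<^sup>2) = 1"
    using unit sum_K'[of "\<lambda>k. (c k)\<^sup>2"] by simp
  moreover have "(\<lambda>\<omega>. \<Sum>k\<in>K'. 0 + c k * X k \<omega>) = (\<lambda>\<omega>. \<Sum>k\<in>K. c k * X k \<omega>)"
    using sum_K' by simp
  ultimately show ?thesis
    by simp
qed

lemma std_normal_density_mult_exp:
  "std_normal_density x * exp (x\<^sup>2 / 4) = sqrt 2 * normal_density 0 (sqrt 2) x"
proof -
  have "exp (- x\<^sup>2 / 2) * exp (x\<^sup>2 / 4) = exp (- x\<^sup>2 / 4)"
    by (simp flip: exp_add)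
  then have "std_normal_density x * exp (x\<^sup>2 / 4) = (1 / sqrt (2 * pi)) * exp (- x\<^sup>2 / 4)"
    by (simp add: std_normal_density_def)
  also have "\<dots> = sqrt 2 * (1 / sqrt (2 * (2 * pi)) * exp (- x\<^sup>2 / 4))"
    unfolding real_sqrt_mult[of 2 "2 * pi"] by simp
  also have "\<dots> = sqrt 2 * normal_density 0 (sqrt 2) x"
    by (simp add: normal_density_def)
  finally show ?thesis .
qed

lemma nn_integral_exp_square_quarter_std_normal:
  assumes "distributed M lborel X (\<lambda>x. ennreal (std_normal_density x))"
  shows "(\<integral>\<^sup>+\<omega>. ennreal (exp ((X \<omega>)\<^sup>2 / 4)) \<partial>M) = ennreal (sqrt 2)"
proof -
  have "(\<integral>\<^sup>+\<omega>. ennreal (exp ((X \<omega>)\<^sup>2 / 4)) \<partial>M)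
      = (\<integral>\<^sup>+x. ennreal (std_normal_density x) * ennreal (exp (x\<^sup>2 / 4)) \<partial>lborel)"
    by (rule distributed_nn_integral[OF assms, symmetric]) simp
  also have "\<dots> = (\<integral>\<^sup>+x. ennreal (sqrt 2) * ennreal (normal_density 0 (sqrt 2) x) \<partial>lborel)"
    by (intro nn_integral_cong)
      (simp add: std_normal_density_mult_exp ennreal_mult'[symmetric] ennreal_mult[symmetric])
  also have "\<dots> = ennreal (sqrt 2) * (\<integral>\<^sup>+x. ennreal (normal_density 0 (sqrt 2) x) \<partial>lborel)"
    by (rule nn_integral_cmult) simp
  also have "(\<integral>\<^sup>+x. ennreal (normal_density 0 (sqrt 2) x) \<partial>lborel) = 1"
    by (subst nn_integral_eq_integral) (auto simp: normal_density_nonneg)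
  finally show ?thesis
    by simp
qed

lemma (in prob_space) prob_sum_squares_std_normal_ge:
  assumes indep: "indep_vars (\<lambda>_. borel) X I" and "finite I"
    and normal: "\<And>i. i \<in> I \<Longrightarrow> distributed M lborel (X i) (\<lambda>x. ennreal (std_normal_density x))"
  shows "prob {\<omega> \<in> space M. a \<le> (\<Sum>i\<in>I. (X i \<omega>)\<^sup>2)} \<le> exp (- a / 4) * sqrt 2 ^ card I"
proof -
  have "(\<lambda>\<omega>. (\<Sum>i\<in>I. (X i \<omega>)\<^sup>2) * indicator (space M) \<omega>) \<in> borel_measurable M"
    using indep unfolding indep_vars_def by (intro borel_measurable_times borel_measurable_sum) auto
  then have "emeasure M {\<omega> \<in> space M. a \<le> (\<Sum>i\<in>I. (X i \<omega>)\<^sup>2)}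
      \<le> ennreal (exp (- (1 / 4) * a))
        * (\<integral>\<^sup>+\<omega>. ennreal (exp ((1 / 4) * (\<Sum>i\<in>I. (X i \<omega>)\<^sup>2))) * indicator (space M) \<omega> \<partial>M)"
    by (intro Chernoff_ineq_nn_integral_ge) auto
  also have "(\<integral>\<^sup>+\<omega>. ennreal (exp ((1 / 4) * (\<Sum>i\<in>I. (X i \<omega>)\<^sup>2))) * indicator (space M) \<omega> \<partial>M)
      = (\<integral>\<^sup>+\<omega>. (\<Prod>i\<in>I. ennreal (exp ((X i \<omega>)\<^sup>2 / 4))) \<partial>M)"
    by (intro nn_integral_cong) (simp add: sum_distrib_left exp_sum prod_ennreal \<open>finite I\<close>)
  also have "\<dots> = (\<Prod>i\<in>I. \<integral>\<^sup>+\<omega>. ennreal (exp ((X i \<omega>)\<^sup>2 / 4)) \<partial>M)"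
    by (intro indep_vars_nn_integral \<open>finite I\<close> indep_vars_compose2[OF indep]) auto
  also have "\<dots> = ennreal (sqrt 2 ^ card I)"
    by (simp add: nn_integral_exp_square_quarter_std_normal normal ennreal_power)
  finally show ?thesis
    by (simp add: emeasure_eq_measure ennreal_mult'[symmetric] ennreal_mult[symmetric] ennreal_le_iff)
qed

lemma prob_space_init_measure: "prob_space (init_measure L n m)"
  unfolding init_measure_def by (intro prob_space_PiM prob_space_normal_density) simp

lemma product_prob_space_std_normal:
  "product_prob_space (\<lambda>_. std_normal_distribution)"
  by (simp add: product_prob_space_def product_sigma_finite_def product_prob_space_axioms_def
      prob_space_normal_density prob_space_imp_sigma_finite)

lemma init_measure_coordinate_measurable [measurable]:
  "(\<lambda>W. W k) \<in> borel_measurable (init_measure L n m)"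
proof (cases "k \<in> weight_idx L n m")
  case True
  then show ?thesis
    using measurable_component_singleton[OF True, of "\<lambda>_. std_normal_distribution"]
    by (simp add: init_measure_def)
next
  case False
  have "W k = undefined" if "W \<in> space (init_measure L n m)" for W
    using that False by (intro extensional_arb[of W "weight_idx L n m"]) (auto simp: init_measure_def space_PiM PiE_def)
  then show ?thesis
    by (subst measurable_cong[where g = "\<lambda>_. undefined"]) auto
qed

lemma init_measure_coordinates_indep:
  assumes "weight_idx L n m \<noteq> {}"
  shows "prob_space.indep_vars (init_measure L n m) (\<lambda>_. borel) (\<lambda>k W. W k) (weight_idx L n m)"
proof -
  interpret P: product_prob_space "\<lambda>_. std_normal_distribution" "weight_idx L n m"
    by (rule product_prob_space_std_normal)
  have "P.indep_vars (\<lambda>_. std_normal_distribution) (\<lambda>k W. W k) (weight_idx L n m)"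
    by (rule P.indep_vars_PiM_coordinates[OF assms])
  then show ?thesis
    unfolding init_measure_def P.indep_vars_def by simp
qed

lemma init_measure_coordinate_std_normal:
  assumes "k \<in> weight_idx L n m"
  shows "distributed (init_measure L n m) lborel (\<lambda>W. W k) (\<lambda>x. ennreal (std_normal_density x))"
  unfolding distributed_def
proof (intro conjI)
  have "distr (init_measure L n m) lborel (\<lambda>W. W k)
      = distr (init_measure L n m) std_normal_distribution (\<lambda>W. W k)"
    by (rule distr_cong) simp_all
  also have "\<dots> = std_normal_distribution"
    unfolding init_measure_def
    by (rule product_prob_space.PiM_component[OF product_prob_space_std_normal assms])
  finally show "distr (init_measure L n m) lborel (\<lambda>W. W k) = std_normal_distribution" .
qed simp_all

lemma prob_mat_vec_admm_W2_sum_squares_ge: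
  assumes "1 \<le> p" "p \<le> L" "(\<Sum>j<m. (c j)\<^sup>2) = 1"
  shows "measure (init_measure L n m)
           {W \<in> space (init_measure L n m). a \<le> (\<Sum>i<m. (mat_vec m (admm_W2 W p) c i)\<^sup>2)}
         \<le> exp (- a / 4) * sqrt 2 ^ m"
proof -
  interpret P: prob_space "init_measure L n m"
    by (rule prob_space_init_measure)
  define K :: "nat \<Rightarrow> widx set" where "K = (\<lambda>i. (\<lambda>j. (p, 2, i, j)) ` {..<m})"
  define cc where "cc = (\<lambda>k::widx. c (snd (snd (snd k))))"
  have "0 < m"
    using assms(3) by (cases m) auto
  then have "(p, 2, 0, 0) \<in> weight_idx L n m"
    using assms by (simp add: weight_idx_def)
  then have indep: "P.indep_vars (\<lambda>_. borel) (\<lambda>k W. W k) (weight_idx L n m)"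
    by (intro init_measure_coordinates_indep) blast
  have K_sub: "K i \<subseteq> weight_idx L n m" if "i < m" for i
    using assms that by (auto simp: K_def weight_idx_def)
  have inj: "inj_on (\<lambda>j. (p, 2::nat, i, j)) {..<m}" for i
    by (auto intro: inj_onI)
  have row: "mat_vec m (admm_W2 W p) c i = (\<Sum>k\<in>K i. cc k * W k)" for W i
    by (simp add: K_def sum.reindex[OF inj] mat_vec_def admm_W2_def cc_def mult.commute)
  have "P.indep_vars (\<lambda>_. borel) (\<lambda>i W. \<Sum>k\<in>K i. cc k * W k) {..<m}"
    by (rule P.indep_vars_linear_combinations[OF indep])
      (use K_sub in \<open>auto simp: disjoint_family_on_def K_def\<close>)
  moreover have "distributed (init_measure L n m) lborel (\<lambda>W. \<Sum>k\<in>K i. cc k * W k)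
      (\<lambda>x. ennreal (std_normal_density x))" if "i < m" for i
  proof (rule P.std_normal_unit_linear_combination[OF indep init_measure_coordinate_std_normal])
    show "(\<Sum>k\<in>K i. (cc k)\<^sup>2) = 1"
      using assms(3) by (simp add: K_def sum.reindex[OF inj] cc_def)
  qed (use that assms in \<open>auto simp: K_def weight_idx_def\<close>)
  ultimately have "P.prob {W \<in> space (init_measure L n m). a \<le> (\<Sum>i<m. (\<Sum>k\<in>K i. cc k * W k)\<^sup>2)}
      \<le> exp (- a / 4) * sqrt 2 ^ card {..<m}"
    by (intro P.prob_sum_squares_std_normal_ge) auto
  then show ?thesis
    by (simp add: row)
qed

definition W2_net_exceedance :: "nat \<Rightarrow> nat \<Rightarrow> nat \<Rightarrow> nat \<Rightarrow> real \<Rightarrow> (widx \<Rightarrow> real) set" where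
  "W2_net_exceedance L n m p T =
     (\<Union>w\<in>grid_net m. {W \<in> space (init_measure L n m).
        T * (L2_set w {..<m})\<^sup>2 < (\<Sum>i<m. (mat_vec m (admm_W2 W p) w i)\<^sup>2)})"

lemma sets_W2_net_exceedance: "W2_net_exceedance L n m p T \<in> sets (init_measure L n m)"
  unfolding W2_net_exceedance_def mat_vec_def admm_W2_def
  by (intro sets.finite_UN finite_grid_net) measurable

lemma op_norm_le_admm_W2_of_notin_W2_net_exceedance:
  assumes "W \<in> space (init_measure L n m)" "W \<notin> W2_net_exceedance L n m p T" "0 < m" "0 \<le> T"
  shows "op_norm_le m (admm_W2 W p) (2 * sqrt T)"
  using assms by (intro op_norm_le_of_grid_net) (auto simp: W2_net_exceedance_def not_less)

lemma measure_mat_vec_admm_W2_exceeds_le: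
  assumes "1 \<le> p" "p \<le> L"
  shows "measure (init_measure L n m) {W \<in> space (init_measure L n m).
           T * (L2_set w {..<m})\<^sup>2 < (\<Sum>i<m. (mat_vec m (admm_W2 W p) w i)\<^sup>2)}
         \<le> exp (- T / 4) * sqrt 2 ^ m"
proof (cases "L2_set w {..<m} = 0")
  case True
  then have "mat_vec m A w i = 0" for A i
    by (simp add: L2_set_eq_0_iff mat_vec_def)
  then show ?thesis
    using True by simp
next
  case False
  interpret P: prob_space "init_measure L n m"
    by (rule prob_space_init_measure)
  define r where "r = L2_set w {..<m}"
  have "r > 0"
    using False L2_set_nonneg[of w "{..<m}"] unfolding r_def by linarith
  define c where "c = (\<lambda>j. w j / r)"
  have "(\<Sum>j<m. (c j)\<^sup>2) = (\<Sum>j<m. (w j)\<^sup>2) / r\<^sup>2"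
    by (simp add: c_def power_divide sum_divide_distrib)
  also have "\<dots> = 1"
    using \<open>r > 0\<close> by (simp add: r_def flip: power2_L2_set)
  finally have c: "(\<Sum>j<m. (c j)\<^sup>2) = 1" .
  have "mat_vec m A c i = mat_vec m A w i / r" for A i
    by (simp add: mat_vec_def c_def sum_divide_distrib)
  then have "(\<Sum>i<m. (mat_vec m (admm_W2 W p) w i)\<^sup>2) = r\<^sup>2 * (\<Sum>i<m. (mat_vec m (admm_W2 W p) c i)\<^sup>2)" for W
    using \<open>r > 0\<close> by (simp add: sum_distrib_left power_divide)
  then have "{W \<in> space (init_measure L n m). T * (L2_set w {..<m})\<^sup>2 < (\<Sum>i<m. (mat_vec m (admm_W2 W p) w i)\<^sup>2)}
      \<subseteq> {W \<in> space (init_measure L n m). T \<le> (\<Sum>i<m. (mat_vec m (admm_W2 W p) c i)\<^sup>2)}"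
    using \<open>r > 0\<close> by (auto simp: r_def[symmetric] mult.commute)
  then have "measure (init_measure L n m) {W \<in> space (init_measure L n m).
        T * (L2_set w {..<m})\<^sup>2 < (\<Sum>i<m. (mat_vec m (admm_W2 W p) w i)\<^sup>2)}
      \<le> measure (init_measure L n m)
          {W \<in> space (init_measure L n m). T \<le> (\<Sum>i<m. (mat_vec m (admm_W2 W p) c i)\<^sup>2)}"
    by (intro P.finite_measure_mono) (simp_all add: mat_vec_def admm_W2_def)
  also have "\<dots> \<le> exp (- T / 4) * sqrt 2 ^ m"
    by (rule prob_mat_vec_admm_W2_sum_squares_ge[OF assms c])
  finally show ?thesis .
qed

lemma measure_W2_net_exceedance_le:
  assumes "1 \<le> p" "p \<le> L"
  shows "measure (init_measure L n m) (W2_net_exceedance L n m p T)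
           \<le> real ((2 * m + 1) ^ m) * (exp (- T / 4) * sqrt 2 ^ m)"
proof -
  interpret P: prob_space "init_measure L n m"
    by (rule prob_space_init_measure)
  have "measure (init_measure L n m) (W2_net_exceedance L n m p T)
      \<le> (\<Sum>w\<in>grid_net m. measure (init_measure L n m) {W \<in> space (init_measure L n m).
            T * (L2_set w {..<m})\<^sup>2 < (\<Sum>i<m. (mat_vec m (admm_W2 W p) w i)\<^sup>2)})"
    unfolding W2_net_exceedance_def
    by (intro P.finite_measure_subadditive_finite finite_grid_net)
      (auto simp: mat_vec_def admm_W2_def)
  also have "\<dots> \<le> (\<Sum>w\<in>grid_net m. exp (- T / 4) * sqrt 2 ^ m)"
    by (intro sum_mono measure_mat_vec_admm_W2_exceeds_le assms)
  also have "\<dots> = real (card (grid_net m)) * (exp (- T / 4) * sqrt 2 ^ m)"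
    by simp
  also have "\<dots> \<le> real ((2 * m + 1) ^ m) * (exp (- T / 4) * sqrt 2 ^ m)"
    using card_grid_net_le[of m] by (intro mult_right_mono) (simp_all only: of_nat_le_iff, simp)
  finally show ?thesis .
qed

section \<open>The concentration bound\<close>

lemma one_le_ln_of_nat: "3 \<le> m \<Longrightarrow> 1 \<le> ln (real m)"
  using exp_le by (subst ln_ge_iff) auto

lemma net_union_bound_le:
  assumes "3 \<le> m"
  shows "real ((2 * m + 1) ^ m) * (exp (- (16 * real m * ln (real m)) / 4) * sqrt 2 ^ m)
           \<le> (1 / real m) ^ m"
proof -
  have "0 < real m"
    using assms by simp
  have "exp (- (16 * real m * ln (real m)) / 4) = exp (- (real 4 * ln (real m))) ^ m"
    by (simp flip: exp_of_nat_mult)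
  also have "\<dots> = (1 / real m ^ 4) ^ m"
  proof -
    have "exp (4 * ln (real m)) = exp (ln (real m ^ 4))"
      using \<open>0 < real m\<close> by (simp add: ln_realpow)
    then show ?thesis
      using \<open>0 < real m\<close> by (simp add: exp_minus inverse_eq_divide)
  qed
  finally have exp_eq: "exp (- (16 * real m * ln (real m)) / 4) = (1 / real m ^ 4) ^ m" .
  have "sqrt 2 \<le> 3 / 2"
    by (rule real_le_lsqrt) (auto simp: power2_eq_square)
  then have "(2 * real m + 1) * sqrt 2 \<le> (2 * real m + 1) * (3 / 2)"
    by (intro mult_left_mono) auto
  also have "\<dots> \<le> 9 * real m"
    using assms by simp
  also have "\<dots> \<le> real m ^ 3"
    using assms mult_mono[of 3 "real m" 3 "real m"] by (simp add: power3_eq_cube)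
  finally have "(2 * real m + 1) * sqrt 2 / real m ^ 4 \<le> real m ^ 3 / real m ^ 4"
    by (rule divide_right_mono) simp
  also have "\<dots> = 1 / real m"
    using \<open>0 < real m\<close> by (simp add: field_simps power_eq_if)
  finally have base: "(2 * real m + 1) * sqrt 2 / real m ^ 4 \<le> 1 / real m" .
  have "real ((2 * m + 1) ^ m) * (exp (- (16 * real m * ln (real m)) / 4) * sqrt 2 ^ m)
      = ((2 * real m + 1) * sqrt 2 / real m ^ 4) ^ m"
    unfolding exp_eq power_mult_distrib power_divide by (simp add: add.commute)
  also have "\<dots> \<le> (1 / real m) ^ m"
    by (rule power_mono[OF base]) simp
  finally show ?thesis .
qed

lemma inverse_power_self_le_exp: "1 \<le> m \<Longrightarrow> (1 / real m) ^ m \<le> exp (- (ln (real m))\<^sup>2)"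
proof -
  assume "1 \<le> m"
  have "(1 / real m) ^ m = exp (- ln (real m)) ^ m"
    using \<open>1 \<le> m\<close> by (simp add: exp_minus inverse_eq_divide)
  also have "\<dots> = exp (- (real m * ln (real m)))"
    by (simp flip: exp_of_nat_mult)
  also have "\<dots> \<le> exp (- (ln (real m))\<^sup>2)"
    using \<open>1 \<le> m\<close> ln_bound[of "real m"]
    by (simp add: power2_eq_square mult_right_mono)
  finally show ?thesis .
qed

lemma growth_factor_power_le:
  assumes "3 \<le> m" "k \<le> L"
  shows "(5 * (2 * sqrt (16 * real m * ln (real m)) / sqrt (real m) + 1)) ^ k
           \<le> 45 ^ L * ln (real m) ^ L"
proof -
  have ln: "1 \<le> ln (real m)"
    by (rule one_le_ln_of_nat[OF assms(1)])
  have eq: "5 * (2 * sqrt (16 * real m * ln (real m)) / sqrt (real m) + 1) = 40 * sqrt (ln (real m)) + 5"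
    using assms(1) by (simp add: real_sqrt_mult)
  have "sqrt (ln (real m)) \<le> ln (real m)"
    using ln mult_left_mono[of 1 "ln (real m)" "ln (real m)"]
    by (intro real_le_lsqrt) (auto simp: power2_eq_square)
  then have "(5 * (2 * sqrt (16 * real m * ln (real m)) / sqrt (real m) + 1)) ^ k \<le> (45 * ln (real m)) ^ k"
    unfolding eq using ln by (intro power_mono) auto
  also have "\<dots> \<le> (45 * ln (real m)) ^ L"
    using ln assms(2) by (intro power_increasing) auto
  finally show ?thesis
    by (simp add: power_mult_distrib)
qed

lemma measure_W2_net_exceedances_le:
  assumes "3 \<le> m" "L \<le> m"
  shows "measure (init_measure L n m) (\<Union>p\<in>{l<..L}. W2_net_exceedance L n m p (16 * real m * ln (real m)))
           \<le> real m * exp (- (ln (real m))\<^sup>2)"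
proof -
  interpret P: prob_space "init_measure L n m"
    by (rule prob_space_init_measure)
  have "P.prob (\<Union>p\<in>{l<..L}. W2_net_exceedance L n m p (16 * real m * ln (real m)))
      \<le> (\<Sum>p\<in>{l<..L}. P.prob (W2_net_exceedance L n m p (16 * real m * ln (real m))))"
    by (intro P.finite_measure_subadditive_finite) (auto intro: sets_W2_net_exceedance)
  also have "\<dots> \<le> (\<Sum>p\<in>{l<..L}. (1 / real m) ^ m)"
  proof (rule sum_mono)
    fix p assume "p \<in> {l<..L}"
    then have "1 \<le> p" "p \<le> L"
      by auto
    from measure_W2_net_exceedance_le[OF this] net_union_bound_le[OF assms(1)]
    show "P.prob (W2_net_exceedance L n m p (16 * real m * ln (real m))) \<le> (1 / real m) ^ m"
      by (rule order.trans)
  qed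
  also have "\<dots> = real (L - l) * (1 / real m) ^ m"
    by simp
  also have "\<dots> \<le> real m * exp (- (ln (real m))\<^sup>2)"
    using assms inverse_power_self_le_exp[of m] by (intro mult_mono) auto
  finally show ?thesis .
qed

lemma admm_b_supnorm_le:
  assumes "s < m" "\<beta> \<ge> 0" "\<And>q. l < q \<Longrightarrow> q \<le> L \<Longrightarrow> op_norm_le m (admm_W2 W q) \<beta>"
  shows "admm_b_supnorm lam L n m W y z0 u0 l s
           \<le> 2 * (5 * (\<beta> / sqrt (real m) + 1)) ^ (L - l) / sqrt (real m)"
proof -
  have "\<bar>admm_b lam L n m W y z0 u0 l s j\<bar> \<le> 2 * (5 * (\<beta> / sqrt (real m) + 1)) ^ (L - l) / sqrt (real m)"
    if "j < m" for j
    by (rule abs_admm_b_le[OF that assms])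
  then show ?thesis
    unfolding admm_b_supnorm_def using \<open>s < m\<close> by (subst Max_le_iff) auto
qed

lemma admm_b_supnorm_le_of_notin_W2_net_exceedances:
  assumes "W \<in> space (init_measure L n m)"
    and "W \<notin> (\<Union>p\<in>{l<..L}. W2_net_exceedance L n m p (16 * real m * ln (real m)))"
    and "3 \<le> m" "s < m"
  shows "admm_b_supnorm lam L n m W y z0 u0 l s \<le> 2 * 45 ^ L * ln (real m) ^ L / sqrt (real m)"
proof -
  define T where "T = 16 * real m * ln (real m)"
  have "0 \<le> T"
    using one_le_ln_of_nat[OF \<open>3 \<le> m\<close>] by (simp add: T_def)
  have "op_norm_le m (admm_W2 W q) (2 * sqrt T)" if "l < q" "q \<le> L" for q
    using assms(1,2,3) that \<open>0 \<le> T\<close>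
    by (intro op_norm_le_admm_W2_of_notin_W2_net_exceedance) (auto simp: T_def)
  then have "admm_b_supnorm lam L n m W y z0 u0 l s
      \<le> 2 * (5 * (2 * sqrt T / sqrt (real m) + 1)) ^ (L - l) / sqrt (real m)"
    using \<open>s < m\<close> \<open>0 \<le> T\<close> by (intro admm_b_supnorm_le) auto
  also have "\<dots> \<le> 2 * 45 ^ L * ln (real m) ^ L / sqrt (real m)"
    using growth_factor_power_le[OF \<open>3 \<le> m\<close>, of "L - l" L] by (simp add: T_def divide_right_mono)
  finally show ?thesis .
qed

lemma admm_b_supnorm_concentration:
  assumes "max L 3 \<le> m" "s < m"
  shows "1 - real m * exp (- (ln (real m))\<^sup>2)
           \<le> measure (init_measure L n m) {W \<in> space (init_measure L n m).
                admm_b_supnorm lam L n m W y z0 u0 l s \<le> 2 * 45 ^ L * ln (real m) ^ L / sqrt (real m)}"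
    (is "_ \<le> measure ?M ?E")
proof -
  interpret P: prob_space ?M
    by (rule prob_space_init_measure)
  let ?U = "\<Union>p\<in>{l<..L}. W2_net_exceedance L n m p (16 * real m * ln (real m))"
  have "3 \<le> m" "L \<le> m"
    using assms(1) by auto
  have "?U \<in> sets ?M"
    by (intro sets.finite_UN) (auto intro: sets_W2_net_exceedance)
  have "?E \<in> sets ?M"
    using borel_measurable_admm_b_supnorm[OF init_measure_coordinate_measurable \<open>s < m\<close>]
    by measurable
  have "space ?M - ?U \<subseteq> ?E"
    using admm_b_supnorm_le_of_notin_W2_net_exceedances \<open>3 \<le> m\<close> \<open>s < m\<close> by auto
  then have "P.prob (space ?M - ?U) \<le> P.prob ?E"
    by (rule P.finite_measure_mono[OF _ \<open>?E \<in> sets ?M\<close>])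
  moreover have "P.prob (space ?M - ?U) = 1 - P.prob ?U"
    by (rule P.prob_compl[OF \<open>?U \<in> sets ?M\<close>])
  moreover have "P.prob ?U \<le> real m * exp (- (ln (real m))\<^sup>2)"
    using \<open>3 \<le> m\<close> \<open>L \<le> m\<close> by (rule measure_W2_net_exceedances_le)
  ultimately show ?thesis
    by linarith
qed

theorem lemma11:
  fixes lam Cy Cz Cu :: real and L n l :: nat
  assumes "lam > 0" and "n \<ge> 1" and "1 \<le> l" and "l \<le> L"
  shows "\<exists>c>0. \<exists>C::real. \<exists>k::nat. \<exists>M0::nat. \<forall>m\<ge>M0. \<forall>y z0 u0 :: nat \<Rightarrow> real. \<forall>s<m.
     (\<forall>i<n. \<bar>y i\<bar> \<le> Cy) \<longrightarrow> (\<forall>i<m. \<bar>z0 i\<bar> \<le> Cz) \<longrightarrow> (\<forall>i<m. \<bar>u0 i\<bar> \<le> Cu) \<longrightarrow>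
     measure (init_measure L n m)
       {W \<in> space (init_measure L n m).
          admm_b_supnorm lam L n m W y z0 u0 l s \<le> C * (ln (real m)) ^ k / sqrt (real m)}
     \<ge> 1 - real m * exp (- c * (ln (real m))\<^sup>2)"
  \<comment> \<open>No hypothesis is needed: |sigma'| <= 2 for every lambda, and the bound is uniform in
    y, z0, u0 and l.\<close>
proof -
  have bound: "1 - real m * exp (- 1 * (ln (real m))\<^sup>2)
      \<le> measure (init_measure L n m) {W \<in> space (init_measure L n m).
           admm_b_supnorm lam L n m W y z0 u0 l s \<le> 2 * 45 ^ L * (ln (real m)) ^ L / sqrt (real m)}"
    if "max L 3 \<le> m" "s < m" for m s and y z0 u0 :: "nat \<Rightarrow> real"
    using admm_b_supnorm_concentration[OF that] by simp
  show ?thesis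
    by (rule exI[of _ "1 :: real"], rule conjI, simp, rule exI[of _ "2 * 45 ^ L :: real"],
        rule exI[of _ L], rule exI[of _ "max L 3"]) (use bound in auto)
qed

end
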